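(* Let $P>0$, $\Omega_0,\Omega_1,\Omega_2>0$, and let $h_0,h_1,h_2$ be independent with $h_i\sim\mathcal{CN}(0,\Omega_i)$; set $\gamma_i=P|h_i|^2$ and $\bar\gamma_i=\mathbb E\gamma_i=P\Omega_i$. For $N\in\{T_1,T_2,R\}$ let $\Gamma_N=\sum_{k=1}^{L_N}P_{I,N}|c_{N,k}|^2$ with $L_N\ge1$, $P_{I,N}>0$, $c_{N,k}\sim\mathcal{CN}(0,\Omega_{N,k})$, $\Omega_{N,k}>0$, all of $h_0,h_1,h_2,c_{N,k}$ mutually independent. Let $\Gamma'_N=\mathbb E(\Gamma_N)$ and $\Gamma''_N=\mathbb E(\Gamma_N^2)$. Let $\omega_1,\omega_2\in(0,1)$ with $\omega_1+\omega_2=1$. For $i\in\{1,2\}$ and $j\in\{1,2\}\setminus\{i\}$ define $$\Upsilon_{T_i,D}=\frac{\gamma_0}{\Gamma_{T_i}+1},\quad \Upsilon_{T_i,1}=\frac{\gamma_i}{\Gamma_{T_i}+1},\quad \Upsilon_{T_i,2}=\frac{\omega_j\gamma_j}{\Gamma_R+\omega_i\Gamma_{T_i}+\omega_i+1},\quad \Upsilon_{T_i}=\Upsilon_{T_i,D}+\frac{\Upsilon_{T_i,1}\Upsilon_{T_i,2}}{\Upsilon_{T_i,1}+\Upsilon_{T_i,2}},$$ let $P^{\mathcal O}_{T_i}(\gamma)=\Pr(\Upsilon_{T_i}<\gamma)$ and define the protocol outage probability $P^{\mathcal O}_{\rm pro}(\gamma)=P^{\mathcal O}_{T_1}(\gamma)+P^{\mathcal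 O}_{T_2}(\gamma)-P^{\mathcal O}_{T_1}(\gamma)P^{\mathcal O}_{T_2}(\gamma)$. Then, as $\gamma_{th}\to0^+$, $$P^{\mathcal O}_{\rm pro}(\gamma_{th})=\sum_{i=1}^{2}\frac{\gamma_{th}^2}{2\bar\gamma_0}\left(\frac{\omega_i\left(\Gamma''_{T_i}+2\Gamma'_{T_i}+1\right)+\left(\Gamma'_R+1\right)\left(\Gamma'_{T_i}+1\right)}{\omega_j\bar\gamma_j}+\frac{\Gamma''_{T_i}+2\Gamma'_{T_i}+1}{\bar\gamma_i}\right)+o(\gamma_{th}^2),$$ where in the $i$-th summand $j$ denotes the element of $\{1,2\}\setminus\{i\}$.
   Context: Model of a three-phase amplify-and-forward two-way relay network with terminals $T_1,T_2$, relay $R$ and co-channel interference: $h_0,h_1,h_2$ are the $T_1$–$T_2$, $T_1$–$R$, $T_2$–$R$ channels, $P$ the common transmit power, $\Gamma_N$ the total interference power at node $N$, $\omega_i$ the relay power-allocation coefficients, and $\Upsilon_{T_i}$ the received SINR at terminal $T_i$. $o(\gamma_{th}^2)$ denotes a quantity whose ratio to $\gamma_{th}^2$ tends to $0$. *)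

theory Defs
  imports "HOL-Probability.Probability" "HOL-Library.Landau_Symbols"
begin

datatype node = T1 | T2 | R

definition tnode :: "nat \<Rightarrow> node" where
  "tnode i = (if i = 1 then T1 else T2)"

definition CN_rv :: "'a measure \<Rightarrow> ('a \<Rightarrow> complex) \<Rightarrow> real \<Rightarrow> bool" where
  "CN_rv M X Om \<longleftrightarrow>
     distributed M lborel (\<lambda>x. Re (X x)) (normal_density 0 (sqrt (Om / 2))) \<and>
     distributed M lborel (\<lambda>x. Im (X x)) (normal_density 0 (sqrt (Om / 2))) \<and>
     prob_space.indep_var M borel (\<lambda>x. Re (X x)) borel (\<lambda>x. Im (X x))"

definition Gamma :: "(node \<Rightarrow> real) \<Rightarrow> (node \<Rightarrow> nat) \<Rightarrow> (node \<Rightarrow> nat \<Rightarrow> 'a \<Rightarrow> complex)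
    \<Rightarrow> node \<Rightarrow> 'a \<Rightarrow> real" where
  "Gamma PI L c N x = (\<Sum>k = 1..L N. PI N * (cmod (c N k x))\<^sup>2)"

definition sinr :: "real \<Rightarrow> (nat \<Rightarrow> real) \<Rightarrow> (nat \<Rightarrow> 'a \<Rightarrow> complex)
    \<Rightarrow> (node \<Rightarrow> 'a \<Rightarrow> real) \<Rightarrow> nat \<Rightarrow> 'a \<Rightarrow> real" where
  "sinr P w h G i x =
    (let j = 3 - i;
         g0 = P * (cmod (h 0 x))\<^sup>2;
         gi = P * (cmod (h i x))\<^sup>2;
         gj = P * (cmod (h j x))\<^sup>2;
         GT = G (tnode i) x;
         GR = G R x;
         uD = g0 / (GT + 1);
         u1 = gi / (GT + 1);
         u2 = w j * gj / (GR + w i * GT + w i + 1)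
     in uD + u1 * u2 / (u1 + u2))"

definition outage :: "'a measure \<Rightarrow> real \<Rightarrow> (nat \<Rightarrow> real) \<Rightarrow> (nat \<Rightarrow> 'a \<Rightarrow> complex)
    \<Rightarrow> (node \<Rightarrow> 'a \<Rightarrow> real) \<Rightarrow> nat \<Rightarrow> real \<Rightarrow> real" where
  "outage M P w h G i \<gamma> = measure M {x \<in> space M. sinr P w h G i x < \<gamma>}"

definition outage_pro :: "'a measure \<Rightarrow> real \<Rightarrow> (nat \<Rightarrow> real) \<Rightarrow> (nat \<Rightarrow> 'a \<Rightarrow> complex)
    \<Rightarrow> (node \<Rightarrow> 'a \<Rightarrow> real) \<Rightarrow> real \<Rightarrow> real" where
  "outage_pro M P w h G \<gamma> =
     outage M P w h G 1 \<gamma> + outage M P w h G 2 \<gamma> - outage M P w h G 1 \<gamma> * outage M P w h G 2 \<gamma>"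

end

theory Submission
  imports Defs "HOL-Real_Asymp.Real_Asymp"
begin

text \<open>
  Given the interference powers, the SINR at \<open>T\<^sub>i\<close> has the form \<open>X\<^sub>0 + X\<^sub>1 X\<^sub>2 / (X\<^sub>1 + X\<^sub>2)\<close>
  with independent exponentials \<open>X\<^sub>n\<close> of rates \<open>r\<^sub>n\<close>. The parallel sum \<open>X\<^sub>1 X\<^sub>2 / (X\<^sub>1 + X\<^sub>2)\<close>
  lies between \<open>min X\<^sub>1 X\<^sub>2 / 2\<close> and \<open>min X\<^sub>1 X\<^sub>2\<close>, and near the origin replacing it by the
  minimum costs only a shift of \<open>\<gamma>\<close> by \<open>\<gamma> \<surd>\<gamma>\<close> and an event of probability \<open>O(\<gamma>\<^sup>2 \<surd>\<gamma>)\<close>.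
  Since the minimum is exponential with rate \<open>r\<^sub>1 + r\<^sub>2\<close>,
  the conditional outage probability is \<open>r\<^sub>0 (r\<^sub>1 + r\<^sub>2) \<gamma>\<^sup>2 / 2 + o(\<gamma>\<^sup>2)\<close>, uniformly dominated by
  four times its leading term. Dominated convergence averages the leading coefficient over the
  interference, which produces the first and second moments of \<open>\<Gamma>\<close>, and the product term of
  the protocol outage probability is \<open>O(\<gamma>\<^sup>4)\<close>.
\<close>

section \<open>The squared modulus of a complex Gaussian\<close>

lemma nn_integral_lborel_even:
  fixes f :: "real \<Rightarrow> ennreal"
  assumes [measurable]: "f \<in> borel_measurable borel" and even: "\<And>x. f (- x) = f x"
  shows "(\<integral>\<^sup>+x. f x \<partial>lborel) = 2 * (\<integral>\<^sup>+x. f x * indicator {0..} x \<partial>lborel)"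
proof -
  have "(\<integral>\<^sup>+x. f x \<partial>lborel) = (\<integral>\<^sup>+x. f x * indicator {0..} x + f x * indicator {..<0} x \<partial>lborel)"
    by (intro nn_integral_cong) (auto split: split_indicator)
  also have "\<dots> = (\<integral>\<^sup>+x. f x * indicator {0..} x \<partial>lborel) + (\<integral>\<^sup>+x. f x * indicator {..<0} x \<partial>lborel)"
    by (rule nn_integral_add) auto
  also have "(\<integral>\<^sup>+x. f x * indicator {..<0} x \<partial>lborel) = (\<integral>\<^sup>+x. f x * indicator {0<..} x \<partial>lborel)"
    using nn_integral_real_affine[of "\<lambda>x. f x * indicator {..<0} x" "-1" 0]
    by (simp add: even indicator_def)
  also have "\<dots> = (\<integral>\<^sup>+x. f x * indicator {0..} x \<partial>lborel)"
    using AE_lborel_singleton[of 0]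
    by (intro nn_integral_cong_AE) (auto split: split_indicator elim!: eventually_mono)
  finally show ?thesis by (simp add: mult_2)
qed

lemma nn_integral_lborel_inverse_1_plus_square:
  "(\<integral>\<^sup>+s. ennreal (1 / (1 + s\<^sup>2)) \<partial>lborel) = ennreal pi"
proof -
  have "(\<integral>\<^sup>+s. ennreal (1 / (1 + s\<^sup>2)) \<partial>lborel)
      = 2 * (\<integral>\<^sup>+s. ennreal (1 / (1 + s\<^sup>2)) * indicator {0..} s \<partial>lborel)"
    by (rule nn_integral_lborel_even) auto
  also have "(\<integral>\<^sup>+s. ennreal (1 / (1 + s\<^sup>2)) * indicator {0..} s \<partial>lborel) = ennreal (pi / 2 - arctan 0)"
    by (rule nn_integral_FTC_atLeast[OF _ _ _ tendsto_arctan_at_top])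
       (auto intro!: derivative_eq_intros simp: add_nonneg_eq_0_iff field_simps power2_eq_square)
  finally show ?thesis using ennreal_mult[of 2 "pi / 2"] by simp
qed

lemma nn_integral_abs_mult_gaussian_tail:
  fixes k Om b :: real
  assumes k: "0 < k" and Om: "0 < Om" and b: "0 \<le> b"
  shows "(\<integral>\<^sup>+x. ennreal (\<bar>x\<bar> * exp (- (x\<^sup>2 * k) / Om) / (pi * Om)) * indicator {b<..} (x\<^sup>2 * k) \<partial>lborel)
     = ennreal (exp (- b / Om) / (pi * k))"
proof -
  define a where "a = sqrt (b / k)"
  have a: "0 \<le> a" "a\<^sup>2 * k = b" using k b by (auto simp: a_def)
  have threshold: "b < x\<^sup>2 * k \<longleftrightarrow> a < x" if "0 \<le> x" for x
  proof -
    have "b < x\<^sup>2 * k \<longleftrightarrow> a\<^sup>2 * k < x\<^sup>2 * k" using a by simp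
    also have "\<dots> \<longleftrightarrow> a\<^sup>2 < x\<^sup>2" using k by simp
    also have "\<dots> \<longleftrightarrow> a < x" using power_mono_iff[of x a 2] a(1) that by (auto simp: not_le[symmetric])
    finally show ?thesis .
  qed
  have "(\<integral>\<^sup>+x. ennreal (\<bar>x\<bar> * exp (- (x\<^sup>2 * k) / Om) / (pi * Om)) * indicator {b<..} (x\<^sup>2 * k) \<partial>lborel)
     = 2 * (\<integral>\<^sup>+x. ennreal (\<bar>x\<bar> * exp (- (x\<^sup>2 * k) / Om) / (pi * Om)) * indicator {b<..} (x\<^sup>2 * k)
              * indicator {0..} x \<partial>lborel)"
    by (rule nn_integral_lborel_even) auto
  also have "(\<integral>\<^sup>+x. ennreal (\<bar>x\<bar> * exp (- (x\<^sup>2 * k) / Om) / (pi * Om)) * indicator {b<..} (x\<^sup>2 * k)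
              * indicator {0..} x \<partial>lborel)
     = (\<integral>\<^sup>+x. ennreal (x * exp (- (x\<^sup>2 * k) / Om) / (pi * Om)) * indicator {a..} x \<partial>lborel)"
  proof (intro nn_integral_cong_AE)
    have "ennreal (\<bar>x\<bar> * exp (- (x\<^sup>2 * k) / Om) / (pi * Om)) * indicator {b<..} (x\<^sup>2 * k) * indicator {0..} x
        = ennreal (x * exp (- (x\<^sup>2 * k) / Om) / (pi * Om)) * indicator {a..} x" if "x \<noteq> a" for x
      using a(1) that threshold[of x] by (cases "0 \<le> x") (auto simp: indicator_def)
    then show "AE x in lborel. ennreal (\<bar>x\<bar> * exp (- (x\<^sup>2 * k) / Om) / (pi * Om)) * indicator {b<..} (x\<^sup>2 * k)
        * indicator {0..} x = ennreal (x * exp (- (x\<^sup>2 * k) / Om) / (pi * Om)) * indicator {a..} x"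
      using AE_lborel_singleton[of a] by (auto elim!: eventually_mono)
  qed
  also have "\<dots> = ennreal (0 - (- exp (- (a\<^sup>2 * k) / Om) / (2 * pi * k)))"
  proof (rule nn_integral_FTC_atLeast)
    show "((\<lambda>x. - exp (- (x\<^sup>2 * k) / Om) / (2 * pi * k)) \<longlongrightarrow> 0) at_top"
    proof -
      have "filterlim (\<lambda>x::real. x\<^sup>2 * k / Om) at_top at_top"
        using k Om by (intro filterlim_tendsto_pos_mult_at_top[OF tendsto_const] filterlim_pow_at_top filterlim_ident
           | simp add: divide_inverse mult.commute[of "_\<^sup>2"] mult.assoc)+
      then have "((\<lambda>x. exp (- (x\<^sup>2 * k / Om))) \<longlongrightarrow> 0) at_top"
        by (rule filterlim_compose[OF exp_at_bot filterlim_compose[OF filterlim_uminus_at_bot_at_top]])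
      then have "((\<lambda>x. - exp (- (x\<^sup>2 * k / Om)) / (2 * pi * k)) \<longlongrightarrow> - 0 / (2 * pi * k)) at_top"
        by (intro tendsto_intros) (use k in auto)
      then show ?thesis by simp
    qed
  qed (use k Om a(1) in \<open>auto intro!: derivative_eq_intros simp: field_simps power2_eq_square\<close>)
  also have "2 * \<dots> = ennreal (exp (- b / Om) / (pi * k))"
    using a k ennreal_mult[of 2 "exp (- b / Om) / (2 * pi * k)"] by simp
  finally show ?thesis .
qed

lemma nn_integral_gaussian_plane_tail:
  fixes Om b :: real
  assumes Om: "0 < Om" and b: "0 \<le> b"
  shows "(\<integral>\<^sup>+x. \<integral>\<^sup>+y. ennreal (exp (- (x\<^sup>2 + y\<^sup>2) / Om) / (pi * Om)) * indicator {b<..} (x\<^sup>2 + y\<^sup>2)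
            \<partial>lborel \<partial>lborel)
     = ennreal (exp (- b / Om))"
proof -
  let ?g = "\<lambda>x y. ennreal (exp (- (x\<^sup>2 + y\<^sup>2) / Om) / (pi * Om)) * indicator {b<..} (x\<^sup>2 + y\<^sup>2)"
  let ?h = "\<lambda>x s. ennreal (\<bar>x\<bar> * exp (- (x\<^sup>2 * (1 + s\<^sup>2)) / Om) / (pi * Om))
                   * indicator {b<..} (x\<^sup>2 * (1 + s\<^sup>2))"
  \<comment> \<open>substitute \<open>y = x s\<close> on every vertical line, then integrate first in \<open>x\<close>\<close>
  have "(\<integral>\<^sup>+y. ?g x y \<partial>lborel) = (\<integral>\<^sup>+s. ?h x s \<partial>lborel)" if x: "x \<noteq> 0" for x
  proof -
    have "(\<integral>\<^sup>+y. ?g x y \<partial>lborel) = ennreal \<bar>x\<bar> * (\<integral>\<^sup>+s. ?g x (0 + x * s) \<partial>lborel)"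
      using x by (intro nn_integral_real_affine) auto
    also have "\<dots> = (\<integral>\<^sup>+s. ennreal \<bar>x\<bar> * ?g x (x * s) \<partial>lborel)"
      by (subst nn_integral_cmult) auto
    also have "\<dots> = (\<integral>\<^sup>+s. ?h x s \<partial>lborel)"
      by (intro nn_integral_cong)
         (simp add: ennreal_mult' power_mult_distrib algebra_simps times_divide_eq_right[symmetric]
           del: times_divide_eq_right)
    finally show ?thesis .
  qed
  then have "(\<integral>\<^sup>+x. \<integral>\<^sup>+y. ?g x y \<partial>lborel \<partial>lborel) = (\<integral>\<^sup>+x. \<integral>\<^sup>+s. ?h x s \<partial>lborel \<partial>lborel)"
    using AE_lborel_singleton[of 0] by (intro nn_integral_cong_AE) (auto elim!: eventually_mono)
  also have "\<dots> = (\<integral>\<^sup>+s. \<integral>\<^sup>+x. ?h x s \<partial>lborel \<partial>lborel)"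
    by (rule lborel_pair.Fubini'[symmetric]) auto
  also have "\<dots> = (\<integral>\<^sup>+s. ennreal (exp (- b / Om) / pi) * ennreal (1 / (1 + s\<^sup>2)) \<partial>lborel)"
  proof (intro nn_integral_cong)
    fix s :: real
    have k: "0 < 1 + s\<^sup>2" by (simp add: add_pos_nonneg)
    show "(\<integral>\<^sup>+x. ?h x s \<partial>lborel) = ennreal (exp (- b / Om) / pi) * ennreal (1 / (1 + s\<^sup>2))"
      using nn_integral_abs_mult_gaussian_tail[OF k Om b] k by (simp add: ennreal_mult'[symmetric])
  qed
  also have "\<dots> = ennreal (exp (- b / Om) / pi) * ennreal pi"
    by (simp add: nn_integral_cmult nn_integral_lborel_inverse_1_plus_square)
  also have "\<dots> = ennreal (exp (- b / Om))"
    by (simp add: ennreal_mult'[symmetric])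
  finally show ?thesis .
qed

lemma normal_density_mult_normal_density:
  assumes "0 < Om"
  shows "normal_density 0 (sqrt (Om / 2)) x * normal_density 0 (sqrt (Om / 2)) y
    = exp (- (x\<^sup>2 + y\<^sup>2) / Om) / (pi * Om)"
proof -
  have "normal_density 0 (sqrt (Om / 2)) x = exp (- x\<^sup>2 / Om) / sqrt (pi * Om)" for x
    using assms by (simp add: normal_density_def field_simps)
  then show ?thesis
    using assms by (simp add: exp_add[symmetric] add_divide_distrib diff_divide_distrib)
qed

context prob_space
begin

lemma CN_rv_measurable:
  assumes "CN_rv M Z Om"
  shows "Z \<in> borel_measurable M"
proof -
  have "(\<lambda>x. Re (Z x)) \<in> borel_measurable M" "(\<lambda>x. Im (Z x)) \<in> borel_measurable M"
    using assms by (auto simp: CN_rv_def distributed_def)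
  then show ?thesis by (rule borel_measurable_complex_iff[THEN iffD2, OF conjI])
qed

lemma CN_rv_norm_square_greater:
  assumes CN: "CN_rv M Z Om" and Om: "0 < Om" and b: "0 \<le> b"
  shows "prob {x\<in>space M. b < (cmod (Z x))\<^sup>2} = exp (- b / Om)"
proof -
  let ?n = "normal_density 0 (sqrt (Om / 2))"
  let ?N = "density lborel ?n"
  let ?RI = "\<lambda>x. (Re (Z x), Im (Z x))"
  have dRe: "distributed M lborel (\<lambda>x. Re (Z x)) ?n" and dIm: "distributed M lborel (\<lambda>x. Im (Z x)) ?n"
    and ind: "indep_var borel (\<lambda>x. Re (Z x)) borel (\<lambda>x. Im (Z x))"
    using CN by (auto simp: CN_rv_def)
  have [measurable]: "Z \<in> borel_measurable M" by (rule CN_rv_measurable[OF CN])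
  interpret N: prob_space ?N by (rule prob_space_normal_density) (use Om in simp)
  have "distr M borel (\<lambda>x. Re (Z x)) = ?N" "distr M borel (\<lambda>x. Im (Z x)) = ?N"
    using dRe dIm by (simp_all add: distributed_def cong: distr_cong)
  then have joint: "distr M (borel \<Otimes>\<^sub>M borel) ?RI = ?N \<Otimes>\<^sub>M ?N"
    using ind unfolding indep_var_distribution_eq by metis
  define S where "S = {z::real \<times> real. b < (fst z)\<^sup>2 + (snd z)\<^sup>2}"
  have "Measurable.pred (borel \<Otimes>\<^sub>M borel) (\<lambda>z::real \<times> real. b < (fst z)\<^sup>2 + (snd z)\<^sup>2)"
    by measurable
  then have [measurable]: "S \<in> sets (borel \<Otimes>\<^sub>M borel)"
    unfolding S_def pred_def by (simp add: space_pair_measure)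
  have "emeasure M {x\<in>space M. b < (cmod (Z x))\<^sup>2} = emeasure M (?RI -` S \<inter> space M)"
    by (auto simp: S_def cmod_power2 intro!: arg_cong[where f = "emeasure M"])
  also have "\<dots> = emeasure (?N \<Otimes>\<^sub>M ?N) S"
    by (subst joint[symmetric], subst emeasure_distr) auto
  also have "\<dots> = (\<integral>\<^sup>+x. \<integral>\<^sup>+y. indicator S (x, y) \<partial>?N \<partial>?N)"
    by (rule N.emeasure_pair_measure) (simp add: sets_pair_measure_cong[OF sets_density sets_density])
  also have "\<dots> = (\<integral>\<^sup>+x. ennreal (?n x) * (\<integral>\<^sup>+y. ennreal (?n y) * indicator S (x, y) \<partial>lborel) \<partial>lborel)"
    by (simp add: nn_integral_density)
  also have "\<dots> = (\<integral>\<^sup>+x. \<integral>\<^sup>+y. ennreal (exp (- (x\<^sup>2 + y\<^sup>2) / Om) / (pi * Om)) * indicator {b<..} (x\<^sup>2 + y\<^sup>2)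
                       \<partial>lborel \<partial>lborel)"
    by (intro nn_integral_cong, subst nn_integral_cmult[symmetric])
       (auto intro!: nn_integral_cong simp: S_def indicator_def ennreal_mult[symmetric]
         normal_density_mult_normal_density[OF Om])
  also have "\<dots> = ennreal (exp (- b / Om))"
    by (rule nn_integral_gaussian_plane_tail[OF Om b])
  finally show ?thesis by (simp add: measure_def)
qed

lemma CN_rv_norm_square_exponential:
  assumes CN: "CN_rv M Z Om" and Om: "0 < Om"
  shows "distributed M lborel (\<lambda>x. (cmod (Z x))\<^sup>2) (exponential_density (1 / Om))"
proof (subst exponential_distributed_iff, safe)
  have [measurable]: "Z \<in> borel_measurable M" by (rule CN_rv_measurable[OF CN])
  show "(\<lambda>x. (cmod (Z x))\<^sup>2) \<in> borel_measurable M" by measurable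
  fix a :: real assume a: "0 \<le> a"
  have "{x\<in>space M. (cmod (Z x))\<^sup>2 \<le> a} = space M - {x\<in>space M. a < (cmod (Z x))\<^sup>2}" by auto
  moreover have "{x\<in>space M. a < (cmod (Z x))\<^sup>2} \<in> events" by measurable
  ultimately show "prob {x\<in>space M. (cmod (Z x))\<^sup>2 \<le> a} = 1 - exp (- a * (1 / Om))"
    using CN_rv_norm_square_greater[OF CN Om a] by (simp add: prob_compl)
qed (use Om in simp)

end

section \<open>Conditioning on an independent random variable\<close>

context prob_space
begin

lemma indep_var_restrict_compose:
  assumes "indep_vars (\<lambda>_. N) X I" and "A \<inter> B = {}" "A \<subseteq> I" "B \<subseteq> I"
    and "f \<in> measurable (PiM A (\<lambda>_. N)) N1" and "g \<in> measurable (PiM B (\<lambda>_. N)) N2"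
  shows "indep_var N1 (\<lambda>x. f (restrict (\<lambda>i. X i x) A)) N2 (\<lambda>x. g (restrict (\<lambda>i. X i x) B))"
  using indep_var_compose[OF indep_var_restrict[OF assms(1-4)] assms(5,6)] by (simp add: comp_def)

lemma measurable_prob_section:
  fixes X :: "'a \<Rightarrow> 'b::second_countable_topology"
  assumes [measurable]: "X \<in> borel_measurable M"
    and Q: "Measurable.pred borel (\<lambda>z::'b \<times> 'b. Q (fst z) (snd z))"
  shows "(\<lambda>y. prob {x\<in>space M. Q (X x) y}) \<in> borel_measurable borel"
proof -
  have "(\<lambda>z. (X (snd z), fst z)) \<in> measurable (borel \<Otimes>\<^sub>M M) (borel \<Otimes>\<^sub>M borel)"
    by measurable
  from measurable_compose[OF this Q[unfolded borel_prod[symmetric]]]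
  have Q_section: "Measurable.pred (borel \<Otimes>\<^sub>M M) (\<lambda>z. Q (X (snd z)) (fst z))" by simp
  define S where "S = {z \<in> space (borel \<Otimes>\<^sub>M M). Q (X (snd z)) (fst z)}"
  have "S \<in> sets (borel \<Otimes>\<^sub>M M)"
    using Q_section unfolding S_def pred_def .
  then have "(\<lambda>y. emeasure M (Pair y -` S)) \<in> borel_measurable borel"
    by (rule measurable_emeasure_Pair)
  moreover have "Pair y -` S = {x\<in>space M. Q (X x) y}" for y
    by (auto simp: S_def space_pair_measure)
  ultimately show ?thesis
    by (simp add: measure_def borel_measurable_enn2real)
qed
lemma indep_var_prob_eq_integral:
  fixes X Y :: "'a \<Rightarrow> 'b::second_countable_topology"
  assumes ind: "indep_var borel X borel Y"
    and Q: "Measurable.pred borel (\<lambda>z::'b \<times> 'b. Q (fst z) (snd z))"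
  shows "(\<lambda>y. prob {x\<in>space M. Q (X x) (Y y)}) \<in> borel_measurable M"
    and "prob {x\<in>space M. Q (X x) (Y x)} = (\<integral>y. prob {x\<in>space M. Q (X x) (Y y)} \<partial>M)"
proof -
  have [measurable]: "X \<in> borel_measurable M" "Y \<in> borel_measurable M"
    using ind by (auto dest: indep_var_rv1 indep_var_rv2)
  have section_measurable [measurable]: "(\<lambda>y. prob {x\<in>space M. Q (X x) y}) \<in> borel_measurable borel"
    by (rule measurable_prob_section[OF _ Q]) simp
  show m: "(\<lambda>y. prob {x\<in>space M. Q (X x) (Y y)}) \<in> borel_measurable M"
    by measurable
  define S where "S = {z::'b \<times> 'b. Q (fst z) (snd z)}"
  let ?DX = "distr M borel X" and ?DY = "distr M borel Y"
  interpret DX: prob_space ?DX by (rule prob_space_distr) simp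
  interpret DY: prob_space ?DY by (rule prob_space_distr) simp
  interpret XY: pair_sigma_finite ?DX ?DY ..
  have "S \<in> sets (borel \<Otimes>\<^sub>M borel)"
    using Q unfolding S_def pred_def borel_prod by simp
  then have S: "S \<in> sets (?DX \<Otimes>\<^sub>M ?DY)"
    by (simp add: sets_pair_measure_cong[OF sets_distr sets_distr])
  have joint: "?DX \<Otimes>\<^sub>M ?DY = distr M (borel \<Otimes>\<^sub>M borel) (\<lambda>x. (X x, Y x))"
    using ind unfolding indep_var_distribution_eq by metis
  have slice: "emeasure ?DX ((\<lambda>x. (x, y)) -` S) = prob {x\<in>space M. Q (X x) y}" for y
  proof -
    have "(\<lambda>x. (x, y)) -` S \<in> sets borel"
      using measurable_sets[OF measurable_Pair2'[of y borel borel] \<open>S \<in> sets (borel \<Otimes>\<^sub>M borel)\<close>]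
      by (simp add: space_pair_measure)
    then show ?thesis
      by (subst emeasure_distr) (auto simp: S_def emeasure_eq_measure intro!: arg_cong[where f = prob])
  qed
  have "emeasure M {x\<in>space M. Q (X x) (Y x)} = emeasure M ((\<lambda>x. (X x, Y x)) -` S \<inter> space M)"
    by (auto simp: S_def intro!: arg_cong[where f = "emeasure M"])
  also have "\<dots> = emeasure (?DX \<Otimes>\<^sub>M ?DY) S"
    unfolding joint using \<open>S \<in> sets (borel \<Otimes>\<^sub>M borel)\<close> by (simp add: emeasure_distr)
  also have "\<dots> = (\<integral>\<^sup>+y. emeasure ?DX ((\<lambda>x. (x, y)) -` S) \<partial>?DY)"
    by (rule XY.emeasure_pair_measure_alt2[OF S])
  also have "\<dots> = (\<integral>\<^sup>+y. ennreal (prob {x\<in>space M. Q (X x) (Y y)}) \<partial>M)"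
    unfolding slice by (rule nn_integral_distr) measurable
  also have "\<dots> = ennreal (\<integral>y. prob {x\<in>space M. Q (X x) (Y y)} \<partial>M)"
    by (rule nn_integral_eq_integral) (auto intro!: integrable_const_bound[where B = 1] m)
  finally show "prob {x\<in>space M. Q (X x) (Y x)} = (\<integral>y. prob {x\<in>space M. Q (X x) (Y y)} \<partial>M)"
    by (simp add: emeasure_eq_measure integral_nonneg_AE)
qed

end

section \<open>Exponential distributions near the origin\<close>

lemma tendsto_exp_remainder_div_power2:
  fixes k :: real
  assumes k: "0 < k"
  shows "((\<lambda>s. (s - (1 - exp (- k * s)) / k) / s\<^sup>2) \<longlongrightarrow> k / 2) (at_right 0)"
proof -
  have "((\<lambda>x::real. (x - 1 + exp (- x)) / x\<^sup>2) \<longlongrightarrow> 1 / 2) (at_right 0)"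
    by real_asymp
  moreover have "filterlim (\<lambda>s. k * s) (at_right 0) (at_right 0)"
    using k by real_asymp
  ultimately have "((\<lambda>s. k * ((k * s - 1 + exp (- (k * s))) / (k * s)\<^sup>2)) \<longlongrightarrow> k * (1 / 2)) (at_right 0)"
    by (intro tendsto_mult tendsto_const) (rule filterlim_compose)
  moreover have "\<forall>\<^sub>F s in at_right 0.
      k * ((k * s - 1 + exp (- (k * s))) / (k * s)\<^sup>2) = (s - (1 - exp (- k * s)) / k) / s\<^sup>2"
    using eventually_at_right_less[of 0]
    by (rule eventually_mono) (use k in \<open>simp add: field_simps power2_eq_square\<close>)
  ultimately have "((\<lambda>s. (s - (1 - exp (- k * s)) / k) / s\<^sup>2) \<longlongrightarrow> k * (1 / 2)) (at_right 0)"
    by (rule Lim_transform_eventually)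
  then show ?thesis by simp
qed

lemma erlang_CDF_0_le:
  assumes "0 < r"
  shows "erlang_CDF 0 r t \<le> r * max 0 t"
  using exp_ge_add_one_self[of "- r * t"] assms by (auto simp: erlang_CDF_0 mult_nonneg_nonpos)

lemma erlang_CDF_0_ge:
  assumes r: "0 < r" and t: "t \<le> s"
  shows "r * (1 - r * s) * max 0 t \<le> erlang_CDF 0 r t"
proof (cases "0 \<le> t")
  case True
  define x where "x = r * t"
  have x: "0 \<le> x" using True r by (simp add: x_def)
  have "x * (1 - x) \<le> x / (1 + x)" using x by (simp add: field_simps mult_nonneg_nonneg)
  also have "x / (1 + x) \<le> 1 - exp (- x)"
    using exp_ge_add_one_self[of x] x by (simp add: exp_minus field_simps)
  finally have "x * (1 - x) \<le> 1 - exp (- x)" .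
  moreover have "r * (1 - r * s) * t \<le> x * (1 - x)"
    unfolding x_def using True r t by (simp add: algebra_simps mult_left_mono mult_right_mono)
  ultimately show ?thesis using True by (simp add: erlang_CDF_0 x_def)
qed (use r in \<open>simp add: erlang_CDF_0\<close>)

context prob_space
begin

lemma distributed_prob_eq_0:
  assumes "distributed M lborel X f"
  shows "prob {x\<in>space M. X x = t} = 0"
proof -
  have "emeasure M (X -` {t} \<inter> space M) = (\<integral>\<^sup>+x. f x * indicator {t} x \<partial>lborel)"
    by (rule distributed_emeasure[OF assms]) simp
  also have "\<dots> = 0"
    using AE_lborel_singleton[of t] by (intro nn_integral_zero') (auto elim!: eventually_mono)
  finally show ?thesis by (auto simp: measure_def vimage_def Int_def conj_commute)
qed

lemma exponential_distributed_prob_less: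
  assumes D: "distributed M lborel X (exponential_density r)" and r: "0 < r"
  shows "prob {x\<in>space M. X x < t} = erlang_CDF 0 r t"
proof (cases "0 \<le> t")
  case True
  have [measurable]: "X \<in> borel_measurable M"
    using D r by (simp add: exponential_distributed_iff)
  have "{x\<in>space M. X x < t} = {x\<in>space M. X x \<le> t} - {x\<in>space M. X x = t}" by auto
  then have "prob {x\<in>space M. X x < t} = prob {x\<in>space M. X x \<le> t} - prob {x\<in>space M. X x = t}"
    by (simp add: finite_measure_Diff subset_eq)
  then show ?thesis
    using erlang_distributed_le[OF D r True] distributed_prob_eq_0[OF D] by simp
next
  case False
  have "prob {x\<in>space M. X x < t} \<le> prob {x\<in>space M. X x \<le> 0}"
    using False D r by (intro finite_measure_mono) (auto simp: exponential_distributed_iff)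
  also have "\<dots> = 0" using exponential_distributedD_le[OF D _ r, of 0] by simp
  finally show ?thesis using False by (simp add: erlang_CDF_0 measure_le_0_iff)
qed

lemma exponential_distributed_prob_less_le:
  assumes "distributed M lborel X (exponential_density r)" and "0 < r" and "0 \<le> t"
  shows "prob {x\<in>space M. X x < t} \<le> r * t"
  using exponential_distributed_prob_less[OF assms(1,2)] erlang_CDF_0_le[OF assms(2), of t] assms(3)
  by simp

lemma exponential_distributed_integral_max_0_diff:
  assumes D: "distributed M lborel X (exponential_density k)" and k: "0 < k" and s: "0 \<le> s"
  shows "(\<integral>x. max 0 (s - X x) \<partial>M) = s - (1 - exp (- k * s)) / k"
proof -
  have "(\<integral>x. max 0 (s - X x) \<partial>M) = (\<integral>t. exponential_density k t * max 0 (s - t) \<partial>lborel)"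
    by (rule distributed_integral[OF D, symmetric]) (auto simp: exponential_density_nonneg[OF k])
  also have "\<dots> = (\<integral>t. indicator {0..s} t *\<^sub>R (k * exp (- t * k) * (s - t)) \<partial>lborel)"
    by (intro Bochner_Integration.integral_cong) (auto simp: exponential_density_def indicator_def)
  also have "\<dots> = (\<lambda>t. - (s - t) * exp (- k * t) + exp (- k * t) / k) s
                 - (\<lambda>t. - (s - t) * exp (- k * t) + exp (- k * t) / k) 0"
  proof (rule integral_FTC_atLeastAtMost[OF s])
    show "continuous_on {0..s} (\<lambda>t. k * exp (- t * k) * (s - t))"
      by (intro continuous_intros)
    show "((\<lambda>t. - (s - t) * exp (- k * t) + exp (- k * t) / k) has_vector_derivative k * exp (- t * k) * (s - t))
        (at t within {0..s})" for t
      unfolding has_real_derivative_iff_has_vector_derivative[symmetric]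
      using k by (auto intro!: derivative_eq_intros simp: field_simps)
  qed
  also have "\<dots> = s - (1 - exp (- k * s)) / k" using k by (simp add: field_simps)
  finally show ?thesis .
qed

lemma prob_indep_exponentials_less_le:
  assumes ind: "indep_vars (\<lambda>_. borel) X I" and I: "finite I" "I \<noteq> {}"
    and D: "\<And>i. i \<in> I \<Longrightarrow> distributed M lborel (X i) (exponential_density (r i))"
    and r: "\<And>i. i \<in> I \<Longrightarrow> 0 < r i" and t: "\<And>i. i \<in> I \<Longrightarrow> 0 \<le> t i"
  shows "prob {x\<in>space M. \<forall>i\<in>I. X i x < t i} \<le> (\<Prod>i\<in>I. r i * t i)"
proof -
  have "{x\<in>space M. \<forall>i\<in>I. X i x < t i} = (\<Inter>i\<in>I. X i -` {..<t i} \<inter> space M)"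
    using I by auto
  then have "prob {x\<in>space M. \<forall>i\<in>I. X i x < t i} = (\<Prod>i\<in>I. prob {x\<in>space M. X i x < t i})"
    using indep_varsD[OF ind I(2,1) subset_refl, of "\<lambda>i. {..<t i}"] by (simp add: vimage_def Int_def conj_commute)
  also have "\<dots> \<le> (\<Prod>i\<in>I. r i * t i)"
    by (intro prod_mono conjI measure_nonneg exponential_distributed_prob_less_le D r t)
  finally show ?thesis .
qed

lemma prob_exponential_add_less_bounds:
  assumes W: "distributed M lborel W (exponential_density v)" and v: "0 < v"
    and ind: "indep_var borel W borel Y" and Y: "\<And>x. x \<in> space M \<Longrightarrow> 0 \<le> Y x" and s: "0 \<le> s"
  shows "v * (1 - v * s) * (\<integral>x. max 0 (s - Y x) \<partial>M) \<le> prob {x\<in>space M. W x + Y x < s}"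
    and "prob {x\<in>space M. W x + Y x < s} \<le> v * (\<integral>x. max 0 (s - Y x) \<partial>M)"
proof -
  have [measurable]: "Y \<in> borel_measurable M" using ind by (rule indep_var_rv2)
  have "prob {x\<in>space M. W x + Y x < s} = (\<integral>y. prob {x\<in>space M. W x + Y y < s} \<partial>M)"
    by (rule indep_var_prob_eq_integral(2)[OF ind, where Q = "\<lambda>u w. u + w < s"])
       (simp add: borel_prod[symmetric])
  also have "\<dots> = (\<integral>y. erlang_CDF 0 v (s - Y y) \<partial>M)"
    using exponential_distributed_prob_less[OF W v] by (simp add: less_diff_eq[symmetric])
  finally have eq: "prob {x\<in>space M. W x + Y x < s} = (\<integral>y. erlang_CDF 0 v (s - Y y) \<partial>M)" .
  have int: "integrable M (\<lambda>y. max 0 (s - Y y))"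
    by (rule integrable_const_bound[where B = s]) (use s Y in auto)
  have int_cdf: "integrable M (\<lambda>y. erlang_CDF 0 v (s - Y y))"
    by (rule integrable_const_bound[where B = 1]) (use v in \<open>auto simp: erlang_CDF_0\<close>)
  show "v * (1 - v * s) * (\<integral>x. max 0 (s - Y x) \<partial>M) \<le> prob {x\<in>space M. W x + Y x < s}"
    unfolding eq integral_mult_right_zero[symmetric]
    by (intro integral_mono int_cdf integrable_mult_right int erlang_CDF_0_ge v) (use Y in auto)
  show "prob {x\<in>space M. W x + Y x < s} \<le> v * (\<integral>x. max 0 (s - Y x) \<partial>M)"
    unfolding eq integral_mult_right_zero[symmetric]
    by (intro integral_mono int_cdf integrable_mult_right int erlang_CDF_0_le v)
qed

lemma tendsto_prob_exponential_add_less: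
  assumes W: "distributed M lborel W (exponential_density v)" and v: "0 < v"
    and Y: "distributed M lborel Y (exponential_density k)" and k: "0 < k"
    and ind: "indep_var borel W borel Y" and nonneg: "\<And>x. x \<in> space M \<Longrightarrow> 0 \<le> Y x"
  shows "((\<lambda>s. prob {x\<in>space M. W x + Y x < s} / s\<^sup>2) \<longlongrightarrow> v * k / 2) (at_right 0)"
proof -
  define e where "e s = s - (1 - exp (- k * s)) / k" for s
  have e: "((\<lambda>s. e s / s\<^sup>2) \<longlongrightarrow> k / 2) (at_right 0)"
    unfolding e_def by (rule tendsto_exp_remainder_div_power2[OF k])
  have e_eq: "(\<integral>x. max 0 (s - Y x) \<partial>M) = e s" if "0 \<le> s" for s
    using exponential_distributed_integral_max_0_diff[OF Y k that] by (simp add: e_def)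
  note bounds = prob_exponential_add_less_bounds[OF W v ind nonneg less_imp_le]
  show ?thesis
  proof (rule tendsto_sandwich)
    show "\<forall>\<^sub>F s in at_right 0. v * (1 - v * s) * (e s / s\<^sup>2) \<le> prob {x\<in>space M. W x + Y x < s} / s\<^sup>2"
      using eventually_at_right_less[of 0]
    proof (rule eventually_mono)
      fix s :: real assume "0 < s"
      with bounds(1)[of s] e_eq[of s]
      have "v * (1 - v * s) * e s / s\<^sup>2 \<le> prob {x\<in>space M. W x + Y x < s} / s\<^sup>2"
        by (intro divide_right_mono) auto
      then show "v * (1 - v * s) * (e s / s\<^sup>2) \<le> prob {x\<in>space M. W x + Y x < s} / s\<^sup>2" by simp
    qed
    show "\<forall>\<^sub>F s in at_right 0. prob {x\<in>space M. W x + Y x < s} / s\<^sup>2 \<le> v * (e s / s\<^sup>2)"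
      using eventually_at_right_less[of 0]
    proof (rule eventually_mono)
      fix s :: real assume "0 < s"
      with bounds(2)[of s] e_eq[of s]
      have "prob {x\<in>space M. W x + Y x < s} / s\<^sup>2 \<le> v * e s / s\<^sup>2"
        by (intro divide_right_mono) auto
      then show "prob {x\<in>space M. W x + Y x < s} / s\<^sup>2 \<le> v * (e s / s\<^sup>2)" by simp
    qed
    have "((\<lambda>s. v * (1 - v * s) * (e s / s\<^sup>2)) \<longlongrightarrow> v * (1 - v * 0) * (k / 2)) (at_right 0)"
      by (intro tendsto_intros e)
    then show "((\<lambda>s. v * (1 - v * s) * (e s / s\<^sup>2)) \<longlongrightarrow> v * k / 2) (at_right 0)" by simp
    show "((\<lambda>s. v * (e s / s\<^sup>2)) \<longlongrightarrow> v * k / 2) (at_right 0)"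
      using tendsto_mult[OF tendsto_const e, of v] by simp
  qed
qed

end

section \<open>The parallel sum of exponentials\<close>

definition parallel_sum :: "real \<Rightarrow> real \<Rightarrow> real" where
  "parallel_sum u v = u * v / (u + v)"

lemma parallel_sum_commute: "parallel_sum u v = parallel_sum v u"
  by (simp add: parallel_sum_def mult.commute add.commute)

lemma parallel_sum_nonneg: "0 \<le> u \<Longrightarrow> 0 \<le> v \<Longrightarrow> 0 \<le> parallel_sum u v"
  by (simp add: parallel_sum_def)

lemma parallel_sum_le_min:
  assumes "0 \<le> u" "0 \<le> v"
  shows "parallel_sum u v \<le> min u v"
proof (cases "u + v = 0")
  case False
  then have "0 < u + v" using assms by simp
  moreover have "u * v \<le> u * (u + v)" "u * v \<le> v * (u + v)" using assms by (simp_all add: algebra_simps)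
  ultimately show ?thesis by (simp add: parallel_sum_def divide_le_eq)
qed (use assms in \<open>simp add: parallel_sum_def\<close>)

lemma min_le_double_parallel_sum:
  assumes "0 \<le> u" "0 \<le> v"
  shows "min u v \<le> 2 * parallel_sum u v"
proof (cases "u + v = 0")
  case False
  then have "0 < u + v" using assms by simp
  moreover have "min u v * (u + v) \<le> 2 * (u * v)"
    using assms by (cases "u \<le> v") (simp_all add: algebra_simps mult_left_mono mult_right_mono)
  ultimately show ?thesis by (simp add: parallel_sum_def le_divide_eq mult_ac)
qed (use assms in \<open>simp add: parallel_sum_def\<close>)

lemma parallel_sum_gap_bound:
  assumes uv: "0 \<le> u" "u \<le> v" and g: "0 < g"
    and small: "parallel_sum u v < g" and gap: "g * sqrt g < u - parallel_sum u v"
  shows "u < 2 * g" and "v < 4 * sqrt g"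
proof -
  have eps: "0 < g * sqrt g" using g by simp
  have uv_pos: "0 < u + v"
    using gap eps uv by (cases "u + v = 0") (auto simp: parallel_sum_def)
  show u: "u < 2 * g"
    using min_le_double_parallel_sum[of u v] uv small by simp
  \<comment> \<open>\<open>g \<surd>g (u + v) < u\<^sup>2 < (2 g)\<^sup>2\<close>\<close>
  have "u - parallel_sum u v = u * u / (u + v)"
    using uv_pos by (simp add: parallel_sum_def field_simps)
  then have "g * sqrt g * (u + v) < u * u" using gap uv_pos by (simp add: less_divide_eq)
  moreover have "g * sqrt g * v \<le> g * sqrt g * (u + v)" using eps uv by (intro mult_left_mono) auto
  moreover have "u * u < (2 * g) * (2 * g)" using u uv by (intro mult_strict_mono) auto
  moreover have "(2 * g) * (2 * g) = (g * sqrt g) * (4 * sqrt g)"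
    using g by (simp add: algebra_simps power2_eq_square[symmetric])
  ultimately have "g * sqrt g * v < g * sqrt g * (4 * sqrt g)" by linarith
  then show "v < 4 * sqrt g" using eps mult_less_cancel_left_pos by blast
qed

lemma parallel_sum_less_cases:
  assumes nonneg: "0 \<le> w" "0 \<le> u" "0 \<le> v" and g: "0 < g"
    and less: "w + parallel_sum u v < g" and not_less: "g + g * sqrt g \<le> w + min u v"
  shows "w < g \<and> (u < 2 * g \<and> v < 4 * sqrt g \<or> v < 2 * g \<and> u < 4 * sqrt g)"
proof -
  have w: "w < g" using less parallel_sum_nonneg[of u v] nonneg by linarith
  have small: "parallel_sum u v < g" using less nonneg by linarith
  have gap: "g * sqrt g < min u v - parallel_sum u v" using less not_less by linarith
  show ?thesis
  proof (cases "u \<le> v")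
    case True
    then show ?thesis using parallel_sum_gap_bound[of u v g] nonneg g small gap w by simp
  next
    case False
    then show ?thesis
      using parallel_sum_gap_bound[of v u g] nonneg g small gap w by (simp add: parallel_sum_commute)
  qed
qed

context prob_space
begin

context
  fixes T :: "nat \<Rightarrow> 'a \<Rightarrow> real" and r :: "nat \<Rightarrow> real"
  assumes indep: "indep_vars (\<lambda>_. borel) T {0, 1, 2}"
    and exponential: "\<And>n. n \<in> {0, 1, 2} \<Longrightarrow> distributed M lborel (T n) (exponential_density (r n))"
    and rate_pos: "\<And>n. n \<in> {0, 1, 2} \<Longrightarrow> 0 < r n"
    and nonneg: "\<And>n x. n \<in> {0, 1, 2} \<Longrightarrow> x \<in> space M \<Longrightarrow> 0 \<le> T n x"
begin

lemma borel_measurable_components [measurable]: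
  "T 0 \<in> borel_measurable M" "T 1 \<in> borel_measurable M" "T 2 \<in> borel_measurable M"
  using exponential rate_pos by (auto simp: exponential_distributed_iff)

lemma indep_var_first_min_others: "indep_var borel (T 0) borel (\<lambda>x. min (T 1 x) (T 2 x))"
  using indep_var_compose[OF indep_var_restrict[OF indep, of "{0}" "{1, 2}"],
      of "\<lambda>\<omega>. \<omega> 0" borel "\<lambda>\<omega>. min (\<omega> 1) (\<omega> 2)" borel]
  by (simp add: measurable_component_singleton comp_def)

lemma exponential_distributed_min_others:
  "distributed M lborel (\<lambda>x. min (T 1 x) (T 2 x)) (exponential_density (r 1 + r 2))"
proof (rule exponential_distributed_min)
  show "indep_var borel (T 1) borel (T 2)"
    using indep_var_compose[OF indep_var_restrict[OF indep, of "{1}" "{2}"],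
        of "\<lambda>\<omega>. \<omega> 1" borel "\<lambda>\<omega>. \<omega> 2" borel]
    by (simp add: measurable_component_singleton comp_def)
qed (use exponential rate_pos in auto)

lemma prob_parallel_sum_less_le:
  assumes g: "0 < g"
  shows "prob {x\<in>space M. T 0 x + parallel_sum (T 1 x) (T 2 x) < g} \<le> 2 * r 0 * (r 1 + r 2) * g\<^sup>2"
proof -
  have "prob {x\<in>space M. T 0 x + parallel_sum (T 1 x) (T 2 x) < g}
      \<le> prob {x\<in>space M. T 0 x \<in> {..<g} \<and> min (T 1 x) (T 2 x) \<in> {..<2 * g}}"
  proof (rule finite_measure_mono)
    show "{x\<in>space M. T 0 x + parallel_sum (T 1 x) (T 2 x) < g}
        \<subseteq> {x\<in>space M. T 0 x \<in> {..<g} \<and> min (T 1 x) (T 2 x) \<in> {..<2 * g}}"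
    proof (intro Collect_mono impI conjI)
      fix x assume x: "x \<in> space M \<and> T 0 x + parallel_sum (T 1 x) (T 2 x) < g"
      then have "0 \<le> T 0 x" "parallel_sum (T 1 x) (T 2 x) < g"
        using nonneg[of 0 x] parallel_sum_nonneg[of "T 1 x" "T 2 x"] nonneg[of 1 x] nonneg[of 2 x] by auto
      then show "x \<in> space M" "T 0 x \<in> {..<g}" "min (T 1 x) (T 2 x) \<in> {..<2 * g}"
        using x min_le_double_parallel_sum[of "T 1 x" "T 2 x"] nonneg[of 1 x] nonneg[of 2 x] by auto
    qed
  qed measurable
  also have "\<dots> = prob {x\<in>space M. T 0 x < g} * prob {x\<in>space M. min (T 1 x) (T 2 x) < 2 * g}"
    using prob_indep_random_variable[OF indep_var_first_min_others, of "{..<g}" "{..<2 * g}"] by simp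
  also have "\<dots> \<le> (r 0 * g) * ((r 1 + r 2) * (2 * g))"
    using g rate_pos[of 0] rate_pos[of 1] rate_pos[of 2]
    by (intro mult_mono exponential_distributed_prob_less_le exponential exponential_distributed_min_others)
       auto
  finally show ?thesis by (simp add: power2_eq_square mult_ac)
qed

lemma prob_min_less_le_prob_parallel_sum_less:
  "prob {x\<in>space M. T 0 x + min (T 1 x) (T 2 x) < g}
     \<le> prob {x\<in>space M. T 0 x + parallel_sum (T 1 x) (T 2 x) < g}"
proof (rule finite_measure_mono)
  have "T 0 x + parallel_sum (T 1 x) (T 2 x) \<le> T 0 x + min (T 1 x) (T 2 x)" if "x \<in> space M" for x
    using parallel_sum_le_min[of "T 1 x" "T 2 x"] nonneg that by simp
  then show "{x\<in>space M. T 0 x + min (T 1 x) (T 2 x) < g}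
      \<subseteq> {x\<in>space M. T 0 x + parallel_sum (T 1 x) (T 2 x) < g}" by fastforce
  show "{x\<in>space M. T 0 x + parallel_sum (T 1 x) (T 2 x) < g} \<in> events"
    unfolding parallel_sum_def by measurable
qed

lemma prob_parallel_sum_less_le_prob_min_less:
  assumes g: "0 < g"
  shows "prob {x\<in>space M. T 0 x + parallel_sum (T 1 x) (T 2 x) < g}
     \<le> prob {x\<in>space M. T 0 x + min (T 1 x) (T 2 x) < g + g * sqrt g} + 16 * r 0 * r 1 * r 2 * g\<^sup>2 * sqrt g"
proof -
  define t where "t n = (if n = 0 then g else if n = 1 then 2 * g else 4 * sqrt g)" for n :: nat
  define t' where "t' n = (if n = 0 then g else if n = 1 then 4 * sqrt g else 2 * g)" for n :: nat
  let ?B = "{x\<in>space M. T 0 x + min (T 1 x) (T 2 x) < g + g * sqrt g}"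
  let ?C = "{x\<in>space M. T 0 x < g \<and> T 1 x < 2 * g \<and> T 2 x < 4 * sqrt g}"
  let ?D = "{x\<in>space M. T 0 x < g \<and> T 1 x < 4 * sqrt g \<and> T 2 x < 2 * g}"
  have "prob {x\<in>space M. T 0 x + parallel_sum (T 1 x) (T 2 x) < g} \<le> prob (?B \<union> (?C \<union> ?D))"
  proof (rule finite_measure_mono)
    show "{x\<in>space M. T 0 x + parallel_sum (T 1 x) (T 2 x) < g} \<subseteq> ?B \<union> (?C \<union> ?D)"
    proof
      fix x assume "x \<in> {x\<in>space M. T 0 x + parallel_sum (T 1 x) (T 2 x) < g}"
      then have x: "x \<in> space M" and less: "T 0 x + parallel_sum (T 1 x) (T 2 x) < g" by auto
      show "x \<in> ?B \<union> (?C \<union> ?D)"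
      proof (cases "T 0 x + min (T 1 x) (T 2 x) < g + g * sqrt g")
        case False
        then have "T 0 x < g \<and> (T 1 x < 2 * g \<and> T 2 x < 4 * sqrt g \<or> T 2 x < 2 * g \<and> T 1 x < 4 * sqrt g)"
          using parallel_sum_less_cases[of "T 0 x" "T 1 x" "T 2 x" g] less nonneg[OF _ x] g by simp
        then show ?thesis using x by auto
      qed (use x in auto)
    qed
  qed measurable
  moreover have "\<dots> \<le> prob ?B + (prob ?C + prob ?D)"
    by (intro order.trans[OF measure_Un_le] add_left_mono measure_Un_le; measurable)
  moreover have "prob ?C \<le> (\<Prod>n\<in>{0, 1, 2}. r n * t n)"
  proof -
    have "?C = {x\<in>space M. \<forall>n\<in>{0, 1, 2}. T n x < t n}" by (auto simp: t_def)
    then show ?thesis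
      by (simp only:) (rule prob_indep_exponentials_less_le[OF indep]; use exponential rate_pos g in \<open>auto simp: t_def\<close>)
  qed
  moreover have "prob ?D \<le> (\<Prod>n\<in>{0, 1, 2}. r n * t' n)"
  proof -
    have "?D = {x\<in>space M. \<forall>n\<in>{0, 1, 2}. T n x < t' n}" by (auto simp: t'_def)
    then show ?thesis
      by (simp only:) (rule prob_indep_exponentials_less_le[OF indep]; use exponential rate_pos g in \<open>auto simp: t'_def\<close>)
  qed
  moreover have "(\<Prod>n\<in>{0, 1, 2}. r n * t n) + (\<Prod>n\<in>{0, 1, 2}. r n * t' n) = 16 * r 0 * r 1 * r 2 * g\<^sup>2 * sqrt g"
    by (simp add: t_def t'_def power2_eq_square)
  ultimately show ?thesis by linarith
qed

lemma prob_parallel_sum_less_div_power2_le: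
  assumes g: "0 < g"
  shows "prob {x\<in>space M. T 0 x + parallel_sum (T 1 x) (T 2 x) < g} / g\<^sup>2
    \<le> prob {x\<in>space M. T 0 x + min (T 1 x) (T 2 x) < g + g * sqrt g} / (g + g * sqrt g)\<^sup>2 * (1 + sqrt g)\<^sup>2
      + 16 * r 0 * r 1 * r 2 * sqrt g"
proof -
  have "(g + g * sqrt g)\<^sup>2 = g\<^sup>2 * (1 + sqrt g)\<^sup>2" by (simp add: algebra_simps power2_eq_square)
  moreover have "0 < 1 + sqrt g" using g by (intro add_pos_nonneg) auto
  ultimately have "(q + c * g\<^sup>2 * sqrt g) / g\<^sup>2 = q / (g + g * sqrt g)\<^sup>2 * (1 + sqrt g)\<^sup>2 + c * sqrt g"
    for q c :: real
    using g by (simp add: field_simps)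
  then show ?thesis
    using divide_right_mono[OF prob_parallel_sum_less_le_prob_min_less[OF g], of "g\<^sup>2"] by simp
qed

lemma tendsto_prob_parallel_sum_less:
  "((\<lambda>g. prob {x\<in>space M. T 0 x + parallel_sum (T 1 x) (T 2 x) < g} / g\<^sup>2) \<longlongrightarrow> r 0 * (r 1 + r 2) / 2)
     (at_right 0)"
proof -
  let ?P = "\<lambda>g. prob {x\<in>space M. T 0 x + parallel_sum (T 1 x) (T 2 x) < g}"
  let ?Q = "\<lambda>g. prob {x\<in>space M. T 0 x + min (T 1 x) (T 2 x) < g}"
  have "0 < r 1 + r 2" using rate_pos[of 1] rate_pos[of 2] by simp
  then have Q: "((\<lambda>g. ?Q g / g\<^sup>2) \<longlongrightarrow> r 0 * (r 1 + r 2) / 2) (at_right 0)"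
    using nonneg[of 1] nonneg[of 2]
    by (intro tendsto_prob_exponential_add_less[OF exponential[of 0] rate_pos[of 0]
          exponential_distributed_min_others _ indep_var_first_min_others]) auto
  have shift: "filterlim (\<lambda>g::real. g + g * sqrt g) (at_right 0) (at_right 0)"
    by real_asymp
  have factor: "((\<lambda>g::real. (1 + sqrt g)\<^sup>2) \<longlongrightarrow> 1) (at_right 0)"
    by real_asymp
  have error: "((\<lambda>g::real. 16 * r 0 * r 1 * r 2 * sqrt g) \<longlongrightarrow> 0) (at_right 0)"
    by real_asymp
  have "((\<lambda>g. ?Q (g + g * sqrt g) / (g + g * sqrt g)\<^sup>2 * (1 + sqrt g)\<^sup>2 + 16 * r 0 * r 1 * r 2 * sqrt g)
      \<longlongrightarrow> r 0 * (r 1 + r 2) / 2 * 1 + 0) (at_right 0)"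
    by (intro tendsto_add tendsto_mult filterlim_compose[OF Q shift] factor error)
  then have upper_lim: "((\<lambda>g. ?Q (g + g * sqrt g) / (g + g * sqrt g)\<^sup>2 * (1 + sqrt g)\<^sup>2
      + 16 * r 0 * r 1 * r 2 * sqrt g) \<longlongrightarrow> r 0 * (r 1 + r 2) / 2) (at_right 0)"
    by simp
  have upper: "\<forall>\<^sub>F g in at_right 0. ?P g / g\<^sup>2
      \<le> ?Q (g + g * sqrt g) / (g + g * sqrt g)\<^sup>2 * (1 + sqrt g)\<^sup>2 + 16 * r 0 * r 1 * r 2 * sqrt g"
    using eventually_at_right_less[of 0] by (rule eventually_mono) (rule prob_parallel_sum_less_div_power2_le)
  have lower: "\<forall>\<^sub>F g in at_right 0. ?Q g / g\<^sup>2 \<le> ?P g / g\<^sup>2"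
    by (intro always_eventually allI divide_right_mono prob_min_less_le_prob_parallel_sum_less) simp
  show ?thesis
    by (rule tendsto_sandwich[OF lower upper Q upper_lim])
qed

end

end

section \<open>Limits and integrability\<close>

lemma integral_dominated_convergence_at_right_0:
  fixes F :: "real \<Rightarrow> 'a \<Rightarrow> real"
  assumes "f \<in> borel_measurable M" and "\<And>g. F g \<in> borel_measurable M" and "integrable M B"
    and "\<And>y. y \<in> space M \<Longrightarrow> ((\<lambda>g. F g y) \<longlongrightarrow> f y) (at_right 0)"
    and "\<And>g y. 0 < g \<Longrightarrow> y \<in> space M \<Longrightarrow> norm (F g y) \<le> B y"
  shows "((\<lambda>g. \<integral>y. F g y \<partial>M) \<longlongrightarrow> (\<integral>y. f y \<partial>M)) (at_right 0)"
proof -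
  have "((\<lambda>t. \<integral>y. F (inverse t) y \<partial>M) \<longlongrightarrow> (\<integral>y. f y \<partial>M)) at_top"
  proof (rule integral_dominated_convergence_at_top[where w = B])
    show "AE y in M. ((\<lambda>t. F (inverse t) y) \<longlongrightarrow> f y) at_top"
      using assms(4) by (intro AE_I2 filterlim_compose[OF _ filterlim_inverse_at_right_top])
    show "\<forall>\<^sub>F t in at_top. AE y in M. norm (F (inverse t) y) \<le> B y"
      using eventually_gt_at_top[of 0] by eventually_elim (use assms(5) in auto)
  qed (use assms(1-3) in auto)
  then show ?thesis by (simp add: filterlim_at_top_to_right)
qed

lemma integrable_power2_sum:
  fixes X :: "'i \<Rightarrow> 'a \<Rightarrow> real"
  assumes "\<And>k. k \<in> K \<Longrightarrow> X k \<in> borel_measurable M" and "\<And>k. k \<in> K \<Longrightarrow> integrable M (\<lambda>x. (X k x)\<^sup>2)"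
  shows "integrable M (\<lambda>x. (\<Sum>k\<in>K. X k x)\<^sup>2)"
proof -
  have "integrable M (\<lambda>x. X k x * X l x)" if "k \<in> K" "l \<in> K" for k l
  proof (rule Bochner_Integration.integrable_bound)
    show "integrable M (\<lambda>x. (X k x)\<^sup>2 + (X l x)\<^sup>2)" using assms(2) that by auto
    show "AE x in M. norm (X k x * X l x) \<le> norm ((X k x)\<^sup>2 + (X l x)\<^sup>2)"
    proof (intro AE_I2)
      fix x
      have "2 * \<bar>X k x\<bar> * \<bar>X l x\<bar> \<le> (X k x)\<^sup>2 + (X l x)\<^sup>2"
        using sum_squares_bound[of "\<bar>X k x\<bar>" "\<bar>X l x\<bar>"] by simp
      moreover have "0 \<le> \<bar>X k x\<bar> * \<bar>X l x\<bar>" by simp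
      ultimately have "\<bar>X k x\<bar> * \<bar>X l x\<bar> \<le> (X k x)\<^sup>2 + (X l x)\<^sup>2" by linarith
      then show "norm (X k x * X l x) \<le> norm ((X k x)\<^sup>2 + (X l x)\<^sup>2)"
        by (simp add: abs_mult)
    qed
  qed (use assms(1) that in auto)
  then show ?thesis
    by (simp add: power2_eq_square sum_product Bochner_Integration.integrable_sum)
qed

lemma smallo_sum_minus_product:
  fixes f1 f2 :: "real \<Rightarrow> real"
  assumes f1: "((\<lambda>g. f1 g / g\<^sup>2) \<longlongrightarrow> K1) (at_right 0)" and f2: "((\<lambda>g. f2 g / g\<^sup>2) \<longlongrightarrow> K2) (at_right 0)"
  shows "(\<lambda>g. f1 g + f2 g - f1 g * f2 g - (g\<^sup>2 * K1 + g\<^sup>2 * K2)) \<in> o[at_right 0](\<lambda>g. g\<^sup>2)"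
proof (rule smalloI_tendsto)
  have ev: "\<forall>\<^sub>F g in at_right 0. g \<noteq> (0::real)"
    using eventually_at_right_less[of 0] by (rule eventually_mono) simp
  have "((\<lambda>g. f2 g / g\<^sup>2 * g\<^sup>2) \<longlongrightarrow> K2 * 0\<^sup>2) (at_right 0)"
    by (intro tendsto_mult f2 tendsto_power tendsto_ident_at)
  moreover have "\<forall>\<^sub>F g in at_right 0. f2 g / g\<^sup>2 * g\<^sup>2 = f2 g"
    using ev by eventually_elim simp
  ultimately have "(f2 \<longlongrightarrow> 0) (at_right 0)"
    using Lim_transform_eventually by fastforce
  then have "((\<lambda>g. f1 g / g\<^sup>2 + f2 g / g\<^sup>2 - f1 g / g\<^sup>2 * f2 g - K1 - K2) \<longlongrightarrow> K1 + K2 - K1 * 0 - K1 - K2)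
      (at_right 0)"
    by (intro tendsto_intros f1 f2)
  moreover have "\<forall>\<^sub>F g in at_right 0. f1 g / g\<^sup>2 + f2 g / g\<^sup>2 - f1 g / g\<^sup>2 * f2 g - K1 - K2
      = (f1 g + f2 g - f1 g * f2 g - (g\<^sup>2 * K1 + g\<^sup>2 * K2)) / g\<^sup>2"
    using ev by eventually_elim (simp add: field_simps)
  ultimately show "((\<lambda>g. (f1 g + f2 g - f1 g * f2 g - (g\<^sup>2 * K1 + g\<^sup>2 * K2)) / g\<^sup>2) \<longlongrightarrow> 0) (at_right 0)"
    using Lim_transform_eventually by fastforce
  show "\<forall>\<^sub>F g in at_right 0. g\<^sup>2 \<noteq> (0::real)"
    using ev by eventually_elim simp
qed

section \<open>The relay network\<close>

text \<open>
  The SINR at \<open>T\<^sub>i\<close> as a function of the squared channel moduli \<open>z = (|h\<^sub>0|\<^sup>2, |h\<^sub>i|\<^sup>2, |h\<^sub>j|\<^sup>2)\<close>, \<open>j = 3 - i\<close>,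
  given the interference powers \<open>s = \<Gamma>\<^sub>T\<^sub>i\<close> and \<open>t = \<Gamma>\<^sub>R\<close>; \<open>outage_coeff\<close> is \<open>r\<^sub>0 (r\<^sub>1 + r\<^sub>2) / 2\<close>
  for the rates \<open>r\<^sub>n\<close> of its three (exponential) terms.
\<close>

definition sinr_given :: "real \<Rightarrow> (nat \<Rightarrow> real) \<Rightarrow> nat \<Rightarrow> real \<Rightarrow> real \<Rightarrow> real \<times> real \<times> real \<Rightarrow> real" where
  "sinr_given P w i s t z =
     P / (s + 1) * fst z
     + parallel_sum (P / (s + 1) * fst (snd z)) (w (3 - i) * P / (t + w i * s + w i + 1) * snd (snd z))"

definition outage_coeff :: "real \<Rightarrow> (nat \<Rightarrow> real) \<Rightarrow> (nat \<Rightarrow> real) \<Rightarrow> nat \<Rightarrow> real \<Rightarrow> real \<Rightarrow> real" where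
  "outage_coeff P Om w i s t =
     (s + 1) / (P * Om 0) * ((s + 1) / (P * Om i) + (t + w i * s + w i + 1) / (w (3 - i) * P * Om (3 - i))) / 2"

definition outage_given :: "'a measure \<Rightarrow> real \<Rightarrow> (nat \<Rightarrow> real) \<Rightarrow> (nat \<Rightarrow> 'a \<Rightarrow> complex)
    \<Rightarrow> nat \<Rightarrow> real \<Rightarrow> real \<Rightarrow> real \<Rightarrow> real" where
  "outage_given M P w h i s t \<gamma> = measure M {x \<in> space M.
     sinr_given P w i s t ((cmod (h 0 x))\<^sup>2, (cmod (h i x))\<^sup>2, (cmod (h (3 - i) x))\<^sup>2) < \<gamma>}"

lemma sinr_eq_sinr_given:
  "sinr P w h G i x =
     sinr_given P w i (G (tnode i) x) (G R x) ((cmod (h 0 x))\<^sup>2, (cmod (h i x))\<^sup>2, (cmod (h (3 - i) x))\<^sup>2)"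
  by (simp add: sinr_def sinr_given_def parallel_sum_def Let_def mult_ac)

lemma measurable_sinr_given_less:
  "Measurable.pred borel (\<lambda>z :: (real \<times> real \<times> real) \<times> (real \<times> real \<times> real).
     sinr_given P w i (fst (snd z)) (fst (snd (snd z))) (fst z) < g)"
  unfolding sinr_given_def parallel_sum_def borel_prod[symmetric] by measurable

lemma measurable_PiM_component_compose:
  assumes "a \<in> A" and [measurable]: "f \<in> borel_measurable borel"
  shows "(\<lambda>\<omega>. f (\<omega> a)) \<in> borel_measurable (PiM A (\<lambda>_. borel))"
  using measurable_compose[OF measurable_component_singleton[OF assms(1)] assms(2)] by simp

lemma measurable_PiM_sum_norm_power2:
  assumes "\<And>k. k \<in> K \<Longrightarrow> e k \<in> A"
  shows "(\<lambda>\<omega>. \<Sum>k\<in>K. q * (cmod (\<omega> (e k)))\<^sup>2) \<in> borel_measurable (PiM A (\<lambda>_. borel))"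
  by (intro borel_measurable_sum measurable_PiM_component_compose assms) measurable

locale relay_network = prob_space M
  for M :: "'a measure" and P :: real and Om :: "nat \<Rightarrow> real" and h :: "nat \<Rightarrow> 'a \<Rightarrow> complex"
    and L :: "node \<Rightarrow> nat" and PI :: "node \<Rightarrow> real" and c :: "node \<Rightarrow> nat \<Rightarrow> 'a \<Rightarrow> complex"
    and Omc :: "node \<Rightarrow> nat \<Rightarrow> real" and w :: "nat \<Rightarrow> real" +
  assumes P_pos: "0 < P"
    and channel: "\<And>n. n \<in> {0, 1, 2} \<Longrightarrow> 0 < Om n \<and> CN_rv M (h n) (Om n)"
    and interference_power_pos: "\<And>N. 0 < PI N"
    and interferer: "\<And>N k. 1 \<le> k \<Longrightarrow> k \<le> L N \<Longrightarrow> 0 < Omc N k \<and> CN_rv M (c N k) (Omc N k)"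
    and indep: "indep_vars (\<lambda>_. borel) (\<lambda>i. case i of Inl n \<Rightarrow> h n | Inr p \<Rightarrow> c (fst p) (snd p))
                  ({0, 1, 2} <+> {(N, k). 1 \<le> k \<and> k \<le> L N})"
    and weight_pos: "0 < w 1" "0 < w 2"
begin

abbreviation G :: "node \<Rightarrow> 'a \<Rightarrow> real" where
  "G \<equiv> Gamma PI L c"

abbreviation fading :: "nat + node \<times> nat \<Rightarrow> 'a \<Rightarrow> complex" where
  "fading \<equiv> \<lambda>j. case j of Inl n \<Rightarrow> h n | Inr p \<Rightarrow> c (fst p) (snd p)"

lemma Gamma_nonneg: "0 \<le> G N x"
  using interference_power_pos[of N] by (simp add: Gamma_def sum_nonneg)

lemma interferer_power_exponential:
  assumes "k \<in> {1..L N}"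
  shows "distributed M lborel (\<lambda>x. PI N * (cmod (c N k x))\<^sup>2) (exponential_density (1 / Omc N k / PI N))"
  using interferer[of k N] interference_power_pos[of N] assms
  by (intro erlang_distributed_mult_const CN_rv_norm_square_exponential) auto

lemma integrable_interferer_power:
  assumes "k \<in> {1..L N}"
  shows "integrable M (\<lambda>x. (PI N * (cmod (c N k x))\<^sup>2) ^ n)"
  using interferer[of k N] interference_power_pos[of N] assms
  by (intro erlang_ith_moment_integrable[OF _ interferer_power_exponential]) auto

lemma measurable_interferer_power:
  assumes "k \<in> {1..L N}"
  shows "(\<lambda>x. PI N * (cmod (c N k x))\<^sup>2) \<in> borel_measurable M"
  using distributed_measurable[OF interferer_power_exponential[OF assms]] by simp

lemma integrable_Gamma: "integrable M (G N)"
  unfolding Gamma_def[abs_def]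
  using integrable_interferer_power[of _ N 1] by (intro Bochner_Integration.integrable_sum) auto

lemma integrable_Gamma_square: "integrable M (\<lambda>x. (G N x)\<^sup>2)"
  unfolding Gamma_def
  using measurable_interferer_power integrable_interferer_power[of _ N 2]
  by (intro integrable_power2_sum) auto

lemma Gamma_eq_PiM_restrict:
  assumes "Inr ` ({N} \<times> {1..L N}) \<subseteq> B"
  shows "G N x = (\<Sum>k\<in>{1..L N}. PI N * (cmod (restrict
            (\<lambda>j. fading j x) B (Inr (N, k))))\<^sup>2)"
  unfolding Gamma_def by (intro sum.cong) (use assms in \<open>auto simp: image_subset_iff\<close>)

lemma indep_var_gains_interference:
  assumes i: "i \<in> {1, 2}"
  shows "indep_var borel (\<lambda>x. ((cmod (h 0 x))\<^sup>2, (cmod (h i x))\<^sup>2, (cmod (h (3 - i) x))\<^sup>2))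
                   borel (\<lambda>x. (G (tnode i) x, G R x, 0::real))"
proof -
  \<comment> \<open>the padding \<open>0\<close> only gives both vectors the common type \<open>indep_var\<close> requires\<close>
  let ?A = "Inl ` {0, 1, 2} :: (nat + node \<times> nat) set"
  let ?B = "Inr ` ({tnode i} \<times> {1..L (tnode i)} \<union> {R} \<times> {1..L R}) :: (nat + node \<times> nat) set"
  let ?f = "\<lambda>\<omega>. ((cmod (\<omega> (Inl 0)))\<^sup>2, (cmod (\<omega> (Inl i)))\<^sup>2, (cmod (\<omega> (Inl (3 - i))))\<^sup>2)"
  let ?g = "\<lambda>\<omega>. (\<Sum>k\<in>{1..L (tnode i)}. PI (tnode i) * (cmod (\<omega> (Inr (tnode i, k))))\<^sup>2,
                 \<Sum>k\<in>{1..L R}. PI R * (cmod (\<omega> (Inr (R, k))))\<^sup>2, 0::real)"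
  have "indep_var borel
      (\<lambda>x. ?f (restrict (\<lambda>j. fading j x) ?A)) borel
      (\<lambda>x. ?g (restrict (\<lambda>j. fading j x) ?B))"
  proof (rule indep_var_restrict_compose[OF indep])
    show "?f \<in> borel_measurable (PiM ?A (\<lambda>_. borel))"
      using i by (intro borel_measurable_Pair measurable_PiM_component_compose) auto
    show "?g \<in> borel_measurable (PiM ?B (\<lambda>_. borel))"
      by (intro borel_measurable_Pair measurable_PiM_sum_norm_power2) auto
  qed auto
  moreover have "G (tnode i) x = (\<Sum>k\<in>{1..L (tnode i)}. PI (tnode i) * (cmod (restrict
            (\<lambda>j. fading j x) ?B (Inr (tnode i, k))))\<^sup>2)"
    "G R x = (\<Sum>k\<in>{1..L R}. PI R * (cmod (restrict
            (\<lambda>j. fading j x) ?B (Inr (R, k))))\<^sup>2)" for x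
    by (intro Gamma_eq_PiM_restrict; auto)+
  ultimately show ?thesis
    using i by (auto simp: restrict_def)
qed

lemma indep_var_Gamma_terminal_relay:
  assumes i: "i \<in> {1, 2}"
  shows "indep_var borel (G (tnode i)) borel (G R)"
proof -
  let ?A = "\<lambda>N. Inr ` ({N} \<times> {1..L N}) :: (nat + node \<times> nat) set"
  let ?g = "\<lambda>N \<omega>. \<Sum>k\<in>{1..L N}. PI N * (cmod (\<omega> (Inr (N, k))))\<^sup>2"
  have "tnode i \<noteq> R" by (simp add: tnode_def)
  then have "indep_var borel
      (\<lambda>x. ?g (tnode i) (restrict (\<lambda>j. fading j x) (?A (tnode i))))
      borel (\<lambda>x. ?g R (restrict (\<lambda>j. fading j x) (?A R)))"
    by (intro indep_var_restrict_compose[OF indep] measurable_PiM_sum_norm_power2) auto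
  moreover have "(\<lambda>x. ?g N (restrict (\<lambda>j. fading j x) (?A N))) = G N" for N
    by (rule ext, rule Gamma_eq_PiM_restrict[symmetric]) simp
  ultimately show ?thesis by simp
qed

lemma indep_vars_scaled_gains:
  assumes i: "i \<in> {1, 2}"
  shows "indep_vars (\<lambda>_. borel) (\<lambda>n x. d n * (cmod (h ([0, i, 3 - i] ! n) x))\<^sup>2) {0, 1, 2}"
proof -
  have "indep_vars (\<lambda>n. PiM {Inl ([0, i, 3 - i] ! n)} (\<lambda>_. borel))
      (\<lambda>n x. restrict (\<lambda>j. fading j x) {Inl ([0, i, 3 - i] ! n)}) {0, 1, 2 :: nat}"
    using i by (intro indep_vars_restrict[OF indep]) (auto simp: disjoint_family_on_def)
  then have "indep_vars (\<lambda>_. borel)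
      (\<lambda>n x. (\<lambda>\<omega>. d n * (cmod (\<omega> (Inl ([0, i, 3 - i] ! n))))\<^sup>2) (restrict (\<lambda>j. fading j x) {Inl ([0, i, 3 - i] ! n)}))
      {0, 1, 2 :: nat}"
    by (rule indep_vars_compose2) (intro measurable_PiM_component_compose; simp)
  then show ?thesis
    by (rule indep_vars_cong[THEN iffD1, rotated -1]) auto
qed

lemma outage_given_asymptotic:
  assumes i: "i \<in> {1, 2}" and s: "0 \<le> s" and t: "0 \<le> t"
  shows "((\<lambda>g. outage_given M P w h i s t g / g\<^sup>2) \<longlongrightarrow> outage_coeff P Om w i s t) (at_right 0)"
    and "0 < g \<Longrightarrow> outage_given M P w h i s t g \<le> 4 * outage_coeff P Om w i s t * g\<^sup>2"
proof -
  define d where "d = [P / (s + 1), P / (s + 1), w (3 - i) * P / (t + w i * s + w i + 1)]"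
  define T where "T n x = d ! n * (cmod (h ([0, i, 3 - i] ! n) x))\<^sup>2" for n x
  define r where "r n = 1 / Om ([0, i, 3 - i] ! n) / d ! n" for n
  have w: "0 < w i" "0 < w (3 - i)" using i weight_pos by auto
  have "0 < t + w i * s + w i + 1" using w s t by (simp add: add_nonneg_pos)
  then have d: "0 < d ! n" if "n \<in> {0, 1, 2}" for n
    using that s w P_pos by (auto simp: d_def)
  have Om: "0 < Om ([0, i, 3 - i] ! n)" and CN: "CN_rv M (h ([0, i, 3 - i] ! n)) (Om ([0, i, 3 - i] ! n))"
    if "n \<in> {0, 1, 2}" for n
    using that i channel by auto
  have indep_T: "indep_vars (\<lambda>_. borel) T {0, 1, 2}"
    unfolding T_def[abs_def] by (rule indep_vars_scaled_gains[OF i])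
  have exponential_T: "distributed M lborel (T n) (exponential_density (r n))" if "n \<in> {0, 1, 2}" for n
    unfolding T_def[abs_def] r_def
    using Om[OF that] d[OF that] by (intro erlang_distributed_mult_const CN_rv_norm_square_exponential CN that) auto
  have r: "0 < r n" if "n \<in> {0, 1, 2}" for n
    using Om[OF that] d[OF that] by (simp add: r_def)
  have T: "0 \<le> T n x" if "n \<in> {0, 1, 2}" for n x
    using d[OF that] by (simp add: T_def)
  have outage_given_eq: "outage_given M P w h i s t g = prob {x\<in>space M. T 0 x + parallel_sum (T 1 x) (T 2 x) < g}"
    for g by (simp add: outage_given_def sinr_given_def T_def d_def)
  have coeff: "r 0 * (r 1 + r 2) / 2 = outage_coeff P Om w i s t"
    using d[of 0] d[of 2] w by (simp add: outage_coeff_def r_def d_def field_simps)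
  show "((\<lambda>g. outage_given M P w h i s t g / g\<^sup>2) \<longlongrightarrow> outage_coeff P Om w i s t) (at_right 0)"
    unfolding outage_given_eq coeff[symmetric]
    by (rule tendsto_prob_parallel_sum_less[OF indep_T exponential_T r T])
  show "0 < g \<Longrightarrow> outage_given M P w h i s t g \<le> 4 * outage_coeff P Om w i s t * g\<^sup>2"
    unfolding outage_given_eq coeff[symmetric]
    using prob_parallel_sum_less_le[OF indep_T exponential_T r T] by (simp add: mult.assoc)
qed

lemma outage_eq_integral_outage_given:
  assumes i: "i \<in> {1, 2}"
  shows "(\<lambda>y. outage_given M P w h i (G (tnode i) y) (G R y) \<gamma>) \<in> borel_measurable M"
    and "outage M P w h G i \<gamma> = (\<integral>y. outage_given M P w h i (G (tnode i) y) (G R y) \<gamma> \<partial>M)"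
  using indep_var_prob_eq_integral[OF indep_var_gains_interference[OF i] measurable_sinr_given_less]
  by (simp_all add: outage_def outage_given_def sinr_eq_sinr_given)

lemma integral_Gamma_plus_1_square:
  shows "integrable M (\<lambda>y. (G N y + 1)\<^sup>2)"
    and "(\<integral>y. (G N y + 1)\<^sup>2 \<partial>M) = (\<integral>y. (G N y)\<^sup>2 \<partial>M) + 2 * (\<integral>y. G N y \<partial>M) + 1"
proof -
  have square: "(\<lambda>y. (G N y + 1)\<^sup>2) = (\<lambda>y. (G N y)\<^sup>2 + 2 * G N y + 1)"
    by (simp add: fun_eq_iff power2_eq_square algebra_simps)
  show "integrable M (\<lambda>y. (G N y + 1)\<^sup>2)"
    unfolding square using integrable_Gamma_square integrable_Gamma by simp
  show "(\<integral>y. (G N y + 1)\<^sup>2 \<partial>M) = (\<integral>y. (G N y)\<^sup>2 \<partial>M) + 2 * (\<integral>y. G N y \<partial>M) + 1"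
    unfolding square using integrable_Gamma_square integrable_Gamma by (simp add: prob_space)
qed

lemma integral_Gamma_plus_1_product:
  assumes i: "i \<in> {1, 2}"
  shows "integrable M (\<lambda>y. (G (tnode i) y + 1) * (G R y + 1))"
    and "(\<integral>y. (G (tnode i) y + 1) * (G R y + 1) \<partial>M) = ((\<integral>y. G (tnode i) y \<partial>M) + 1) * ((\<integral>y. G R y \<partial>M) + 1)"
proof -
  have indep_shifted: "indep_var borel (\<lambda>y. G (tnode i) y + 1) borel (\<lambda>y. G R y + 1)"
    using indep_var_compose[OF indep_var_Gamma_terminal_relay[OF i], of "\<lambda>s. s + 1" borel "\<lambda>t. t + 1" borel]
    by (simp add: comp_def)
  have int_shifted: "integrable M (\<lambda>y. G N y + 1)" for N
    using integrable_Gamma by simp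
  show "integrable M (\<lambda>y. (G (tnode i) y + 1) * (G R y + 1))"
    by (rule indep_var_integrable[OF indep_shifted int_shifted int_shifted])
  have "(\<integral>y. G N y + 1 \<partial>M) = (\<integral>y. G N y \<partial>M) + 1" for N
    using integrable_Gamma by (simp add: prob_space)
  then show "(\<integral>y. (G (tnode i) y + 1) * (G R y + 1) \<partial>M) = ((\<integral>y. G (tnode i) y \<partial>M) + 1) * ((\<integral>y. G R y \<partial>M) + 1)"
    using indep_var_lebesgue_integral[OF indep_shifted int_shifted int_shifted] by simp
qed

lemma integral_outage_coeff:
  assumes i: "i \<in> {1, 2}"
  shows "integrable M (\<lambda>y. outage_coeff P Om w i (G (tnode i) y) (G R y))"
    and "(\<integral>y. outage_coeff P Om w i (G (tnode i) y) (G R y) \<partial>M) =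
      1 / (2 * (P * Om 0)) *
        ((w i * ((\<integral>x. (G (tnode i) x)\<^sup>2 \<partial>M) + 2 * (\<integral>x. G (tnode i) x \<partial>M) + 1)
          + ((\<integral>x. G R x \<partial>M) + 1) * ((\<integral>x. G (tnode i) x \<partial>M) + 1)) / (w (3 - i) * (P * Om (3 - i)))
         + ((\<integral>x. (G (tnode i) x)\<^sup>2 \<partial>M) + 2 * (\<integral>x. G (tnode i) x \<partial>M) + 1) / (P * Om i))"
    (is "_ = ?K")
proof -
  let ?T = "tnode i"
  define A where "A = 1 / (P * Om 0) * (1 / (P * Om i) + w i / (w (3 - i) * P * Om (3 - i))) / 2"
  define B where "B = 1 / (P * Om 0) / (w (3 - i) * P * Om (3 - i)) / 2"
  have pos: "0 < P" "0 < Om 0" "0 < Om i" "0 < Om (3 - i)" "0 < w (3 - i)"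
    using i P_pos channel weight_pos by auto
  \<comment> \<open>the relay denominator splits as \<open>(t + 1) + w\<^sub>i (s + 1)\<close>\<close>
  have coeff: "outage_coeff P Om w i s t = A * (s + 1)\<^sup>2 + B * ((s + 1) * (t + 1))" for s t
    using pos by (simp add: outage_coeff_def A_def B_def field_simps power2_eq_square)
  show "integrable M (\<lambda>y. outage_coeff P Om w i (G ?T y) (G R y))"
    unfolding coeff using integral_Gamma_plus_1_square(1) integral_Gamma_plus_1_product(1)[OF i] by simp
  have "(\<integral>y. outage_coeff P Om w i (G ?T y) (G R y) \<partial>M)
      = A * (\<integral>y. (G ?T y + 1)\<^sup>2 \<partial>M) + B * (\<integral>y. (G ?T y + 1) * (G R y + 1) \<partial>M)"
    unfolding coeff using integral_Gamma_plus_1_square(1) integral_Gamma_plus_1_product(1)[OF i] by simp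
  also have "\<dots> = A * ((\<integral>y. (G ?T y)\<^sup>2 \<partial>M) + 2 * (\<integral>y. G ?T y \<partial>M) + 1)
      + B * (((\<integral>y. G ?T y \<partial>M) + 1) * ((\<integral>y. G R y \<partial>M) + 1))"
    by (simp only: integral_Gamma_plus_1_square(2) integral_Gamma_plus_1_product(2)[OF i])
  also have "\<dots> = ?K"
  proof -
    have "A * (E2 + 2 * E1 + 1) + B * ((E1 + 1) * (ER + 1)) = 1 / (2 * (P * Om 0)) *
        ((w i * (E2 + 2 * E1 + 1) + (ER + 1) * (E1 + 1)) / (w (3 - i) * (P * Om (3 - i)))
         + (E2 + 2 * E1 + 1) / (P * Om i))" for E2 E1 ER :: real
      using pos by (simp add: A_def B_def field_simps)
    then show ?thesis .
  qed
  finally show "(\<integral>y. outage_coeff P Om w i (G ?T y) (G R y) \<partial>M) = ?K" .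
qed

lemma tendsto_outage_div_power2:
  assumes i: "i \<in> {1, 2}"
  shows "((\<lambda>\<gamma>. outage M P w h G i \<gamma> / \<gamma>\<^sup>2) \<longlongrightarrow> (\<integral>y. outage_coeff P Om w i (G (tnode i) y) (G R y) \<partial>M))
    (at_right 0)"
proof -
  have "((\<lambda>\<gamma>. \<integral>y. outage_given M P w h i (G (tnode i) y) (G R y) \<gamma> / \<gamma>\<^sup>2 \<partial>M)
      \<longlongrightarrow> (\<integral>y. outage_coeff P Om w i (G (tnode i) y) (G R y) \<partial>M)) (at_right 0)"
  proof (rule integral_dominated_convergence_at_right_0)
    show "(\<lambda>y. outage_coeff P Om w i (G (tnode i) y) (G R y)) \<in> borel_measurable M"
      using integral_outage_coeff(1)[OF i] by auto
    show "(\<lambda>y. outage_given M P w h i (G (tnode i) y) (G R y) \<gamma> / \<gamma>\<^sup>2) \<in> borel_measurable M" for \<gamma>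
      using outage_eq_integral_outage_given(1)[OF i] by simp
    show "integrable M (\<lambda>y. 4 * outage_coeff P Om w i (G (tnode i) y) (G R y))"
      using integral_outage_coeff(1)[OF i] by simp
    show "((\<lambda>\<gamma>. outage_given M P w h i (G (tnode i) y) (G R y) \<gamma> / \<gamma>\<^sup>2)
        \<longlongrightarrow> outage_coeff P Om w i (G (tnode i) y) (G R y)) (at_right 0)" for y
      by (rule outage_given_asymptotic(1)[OF i Gamma_nonneg Gamma_nonneg])
    show "norm (outage_given M P w h i (G (tnode i) y) (G R y) \<gamma> / \<gamma>\<^sup>2)
        \<le> 4 * outage_coeff P Om w i (G (tnode i) y) (G R y)" if "0 < \<gamma>" for \<gamma> y
      using outage_given_asymptotic(2)[OF i Gamma_nonneg Gamma_nonneg that] that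
      by (simp add: outage_given_def abs_of_nonneg pos_divide_le_eq)
  qed
  then show ?thesis
    by (simp add: outage_eq_integral_outage_given(2)[OF i])
qed

end

theorem theorem2:
  fixes M :: "'a measure" and P :: real and Om :: "nat \<Rightarrow> real"
    and h :: "nat \<Rightarrow> 'a \<Rightarrow> complex" and L :: "node \<Rightarrow> nat" and PI :: "node \<Rightarrow> real"
    and c :: "node \<Rightarrow> nat \<Rightarrow> 'a \<Rightarrow> complex" and Omc :: "node \<Rightarrow> nat \<Rightarrow> real"
    and w :: "nat \<Rightarrow> real"
  assumes "prob_space M"
    and "P > 0"
    and "\<forall>i\<in>{0,1,2}. Om i > 0 \<and> CN_rv M (h i) (Om i)"
    and "\<forall>N. L N \<ge> 1 \<and> PI N > 0"
    and "\<forall>N k. 1 \<le> k \<and> k \<le> L N \<longrightarrow> Omc N k > 0 \<and> CN_rv M (c N k) (Omc N k)"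
    and "prob_space.indep_vars M (\<lambda>_. borel)
           (\<lambda>i. case i of Inl n \<Rightarrow> h n | Inr p \<Rightarrow> c (fst p) (snd p))
           ({0, 1, 2} <+> {(N, k). 1 \<le> k \<and> k \<le> L N})"
    and "0 < w 1" and "w 1 < 1" and "0 < w 2" and "w 2 < 1" and "w 1 + w 2 = 1"
  shows "(\<lambda>\<gamma>. outage_pro M P w h (Gamma PI L c) \<gamma>
            - (\<Sum>i\<in>{1, 2::nat}. \<gamma>\<^sup>2 / (2 * (P * Om 0)) *
                ((w i * ((\<integral>x. (Gamma PI L c (tnode i) x)\<^sup>2 \<partial>M)
                         + 2 * (\<integral>x. Gamma PI L c (tnode i) x \<partial>M) + 1)
                  + ((\<integral>x. Gamma PI L c R x \<partial>M) + 1) * ((\<integral>x. Gamma PI L c (tnode i) x \<partial>M) + 1))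
                   / (w (3 - i) * (P * Om (3 - i)))
                 + ((\<integral>x. (Gamma PI L c (tnode i) x)\<^sup>2 \<partial>M)
                     + 2 * (\<integral>x. Gamma PI L c (tnode i) x \<partial>M) + 1) / (P * Om i))))
         \<in> o[at_right 0](\<lambda>\<gamma>. \<gamma>\<^sup>2)"
proof -
  interpret relay_network M P Om h L PI c Omc w
  proof (rule relay_network.intro[OF assms(1)], rule relay_network_axioms.intro)
    show "\<And>n. n \<in> {0, 1, 2} \<Longrightarrow> 0 < Om n \<and> CN_rv M (h n) (Om n)"
      using assms(3) by blast
    show "\<And>N. 0 < PI N" using assms(4) by blast
    show "\<And>N k. 1 \<le> k \<Longrightarrow> k \<le> L N \<Longrightarrow> 0 < Omc N k \<and> CN_rv M (c N k) (Omc N k)"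
      using assms(5) by blast
  qed (use assms(2,6,7,9) in auto)
  let ?K = "\<lambda>i. \<integral>y. outage_coeff P Om w i (Gamma PI L c (tnode i) y) (Gamma PI L c R y) \<partial>M"
  have "(\<lambda>\<gamma>. outage M P w h (Gamma PI L c) 1 \<gamma> + outage M P w h (Gamma PI L c) 2 \<gamma>
        - outage M P w h (Gamma PI L c) 1 \<gamma> * outage M P w h (Gamma PI L c) 2 \<gamma>
        - (\<gamma>\<^sup>2 * ?K 1 + \<gamma>\<^sup>2 * ?K 2)) \<in> o[at_right 0](\<lambda>\<gamma>. \<gamma>\<^sup>2)"
    by (intro smallo_sum_minus_product tendsto_outage_div_power2) auto
  then show ?thesis
    by (simp add: outage_pro_def integral_outage_coeff(2))
qed

end
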